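(* Let $p$ be an odd prime and let $\nu$ and $l$ be positive integers. If $2^{\nu+1}\nmid(p^l+1)$, then \[t(2^{\nu+1},p^l):=\frac{\phi(2^{\nu+1})}{2\operatorname{ord}_{2^{\nu+1}}(p^{l})}=\gcd(2^{\nu-1},\alpha_p l).\] In particular, if $p=5$, then $t(2^{\nu+1},5^l)=\gcd(2^{\nu-1},l)$.
   Context: $\phi$ is Euler's totient function and $\operatorname{ord}_m(x)$ is the multiplicative order of $x$ modulo $m$. For an odd prime $p$ and $\nu\geq1$, $\alpha_p$ denotes the unique integer in $\{0,1,\dots,2^{\nu-1}-1\}$ such that $p\equiv 5^{\alpha_p}\pmod{2^{\nu+1}}$ if $p\equiv1\pmod 4$, and $p\equiv -5^{\alpha_p}\pmod{2^{\nu+1}}$ if $p\equiv 3\pmod 4$ (so $\alpha_p=0$ when $\nu=1$). *)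

theory Defs
  imports "HOL-Number_Theory.Number_Theory"
begin

definition alpha :: "nat \<Rightarrow> nat \<Rightarrow> nat" where
  "alpha p \<nu> = (THE a. a < 2 ^ (\<nu> - 1) \<and>
      (if p mod 4 = 1 then [int p = 5 ^ a] (mod 2 ^ (\<nu> + 1))
       else [int p = - (5 ^ a)] (mod 2 ^ (\<nu> + 1))))"

definition t_index :: "nat \<Rightarrow> nat \<Rightarrow> real" where
  "t_index m q = real (totient m) / (2 * real (ord m q))"

end

(* Modulo 2^k (k >= 2) the powers 5^a, a < 2^(k-2), are exactly the residues congruent to 1 mod 4,
   so p = +-5^alpha and p^l = +-5^(alpha l).  The order of 5^j is 2^(k-2) / gcd(2^(k-2), j), a power
   of 2.  A minus sign does not change the order unless p^l = -1: odd powers of -5^j are 3 mod 4, and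
   if 5^j is not 1 its order is even, so odd exponents never give 1 on either side.  Dividing
   phi(2^k) = 2^(k-1) by twice the order leaves the gcd. *)
theory Submission
  imports Defs
begin

lemma ord_two_power_five:
  assumes "k \<ge> 2"
  shows "ord (2 ^ k) (5::nat) = 2 ^ (k - 2)"
proof (cases "k = 2")
  case True
  then show ?thesis by (simp add: ord_eq_Suc_0_iff cong_def)
next
  case False
  with assms show ?thesis by (simp add: ord_twopow_3_5)
qed

lemma coprime_two_power_five: "coprime (2 ^ k) (5::nat)"
  by (simp add: coprime_commute coprime_power_right_iff)

lemma power_five_cong_iff:
  assumes "k \<ge> 2"
  shows "[(5::nat) ^ a = 5 ^ b] (mod 2 ^ k) \<longleftrightarrow> [a = b] (mod 2 ^ (k - 2))"
  using order_divides_expdiff[OF coprime_two_power_five] ord_two_power_five[OF assms] by simp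

lemma power_five_mod_four: "(5::nat) ^ a mod 4 = 1"
  by (induction a) (simp_all add: mod_mult_right_eq[of 5, symmetric])

lemma power_two_eq_four_mult:
  assumes "k \<ge> 2"
  shows "(2::'a::comm_semiring_1) ^ k = 4 * 2 ^ (k - 2)"
proof -
  have "(2::'a) ^ k = 2 ^ 2 * 2 ^ (k - 2)"
    using assms by (metis le_add_diff_inverse power_add)
  then show ?thesis
    by simp
qed

lemma power_five_residues:
  assumes "k \<ge> 2"
  shows "(\<lambda>a. (5::nat) ^ a mod 2 ^ k) ` {..<2 ^ (k - 2)} = {x. x < 2 ^ k \<and> x mod 4 = 1}"
    (is "?f ` {..<?N} = ?T")
proof (rule card_subset_eq)
  have modulus: "(2::nat) ^ k = 4 * ?N"
    using power_two_eq_four_mult[OF assms] .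
  have "?T = (\<lambda>j. 4 * j + 1) ` {..<?N}"
  proof (intro Set.set_eqI iffI)
    fix x assume "x \<in> ?T"
    then have "x mod 4 = 1" "x < 4 * ?N"
      using modulus by auto
    then have "x = 4 * (x div 4) + 1" "x div 4 < ?N"
      by presburger+
    then show "x \<in> (\<lambda>j. 4 * j + 1) ` {..<?N}" by blast
  qed (use modulus in auto)
  then have "card ?T = ?N"
    by (simp add: card_image inj_on_def)
  moreover have "inj_on ?f {..<?N}"
    using power_five_cong_iff[OF assms] by (intro inj_onI) (auto simp: cong_def)
  ultimately show "card (?f ` {..<?N}) = card ?T"
    by (simp add: card_image)
  show "?f ` {..<?N} \<subseteq> ?T"
    using modulus power_five_mod_four by (auto simp: mod_mod_cancel)
qed (use assms in simp)

lemma exists_power_five_cong: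
  fixes z :: int
  assumes "k \<ge> 2" "z mod 4 = 1"
  shows "\<exists>a < 2 ^ (k - 2). [5 ^ a = z] (mod 2 ^ k)"
proof -
  have "4 dvd (2::int) ^ k"
    using le_imp_power_dvd[OF assms(1), of "2::int"] by simp
  define x where "x = nat (z mod 2 ^ k)"
  have x: "int x = z mod 2 ^ k"
    unfolding x_def by simp
  then have "int x mod 4 = 1"
    using \<open>4 dvd (2::int) ^ k\<close> assms(2) by (simp add: mod_mod_cancel)
  then have "x mod 4 = 1"
    by presburger
  moreover have "int x < 2 ^ k"
    using x by simp
  then have "x < 2 ^ k"
    by (metis of_nat_less_iff of_nat_numeral of_nat_power)
  ultimately obtain a where "a < 2 ^ (k - 2)" "5 ^ a mod 2 ^ k = x"
    using power_five_residues[OF assms(1)] by (metis (mono_tags, lifting) image_iff lessThan_iff mem_Collect_eq)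
  then have "(5::int) ^ a mod 2 ^ k = z mod 2 ^ k"
    using x by (metis of_nat_mod of_nat_numeral of_nat_power)
  with \<open>a < 2 ^ (k - 2)\<close> show ?thesis
    by (auto simp: cong_def)
qed

lemma power_five_cong_imp_eq:
  assumes "k \<ge> 2" "a < 2 ^ (k - 2)" "b < 2 ^ (k - 2)" "[(5::int) ^ a = 5 ^ b] (mod 2 ^ k)"
  shows "a = b"
proof -
  have "[(5::nat) ^ a = 5 ^ b] (mod 2 ^ k)"
    using assms(4) by (metis cong_int_iff of_nat_numeral of_nat_power)
  then have "[a = b] (mod 2 ^ (k - 2))"
    using power_five_cong_iff[OF assms(1)] by blast
  with assms(2,3) show ?thesis
    by (simp add: cong_def)
qed

lemma alpha_cong:
  assumes "\<nu> > 0" "odd p"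
  shows "alpha p \<nu> < 2 ^ (\<nu> - 1)"
    and "[int p = (if p mod 4 = 1 then 1 else -1) * 5 ^ alpha p \<nu>] (mod 2 ^ (\<nu> + 1))"
proof -
  define \<epsilon> :: int where "\<epsilon> = (if p mod 4 = 1 then 1 else -1)"
  define P where "P a \<longleftrightarrow> a < 2 ^ (\<nu> - 1) \<and> [int p = \<epsilon> * 5 ^ a] (mod 2 ^ (\<nu> + 1))" for a
  have k: "\<nu> + 1 \<ge> 2" "\<nu> + 1 - 2 = \<nu> - 1"
    using assms(1) by simp_all
  have alpha_eq: "alpha p \<nu> = (THE a. P a)"
    unfolding alpha_def P_def \<epsilon>_def by (rule arg_cong[where f = The]) (auto simp: cong_minus_minus_iff)
  have "\<epsilon> * int p mod 4 = 1"
    using assms(2) unfolding \<epsilon>_def by presburger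
  then obtain a where "a < 2 ^ (\<nu> - 1)" "[5 ^ a = \<epsilon> * int p] (mod 2 ^ (\<nu> + 1))"
    using exists_power_five_cong[OF k(1)] k(2) by auto
  moreover have "\<epsilon> * \<epsilon> = 1"
    unfolding \<epsilon>_def by simp
  ultimately have "P a"
    unfolding P_def by (metis cong_scalar_left cong_sym mult.assoc mult_1)
  moreover have "b = a" if "P b" for b
  proof (rule power_five_cong_imp_eq[OF k(1)])
    have "[\<epsilon> * 5 ^ b = \<epsilon> * 5 ^ a] (mod 2 ^ (\<nu> + 1))"
      using \<open>P a\<close> \<open>P b\<close> unfolding P_def by (meson cong_sym cong_trans)
    then show "[(5::int) ^ b = 5 ^ a] (mod 2 ^ (\<nu> + 1))"
      using \<open>\<epsilon> * \<epsilon> = 1\<close> by (metis cong_scalar_left mult.assoc mult_1)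
  qed (use \<open>P a\<close> \<open>P b\<close> k(2) in \<open>simp_all add: P_def\<close>)
  ultimately have "P (alpha p \<nu>)"
    unfolding alpha_eq by (metis theI)
  then show "alpha p \<nu> < 2 ^ (\<nu> - 1)" "[int p = (if p mod 4 = 1 then 1 else -1) * 5 ^ alpha p \<nu>] (mod 2 ^ (\<nu> + 1))"
    unfolding P_def \<epsilon>_def by simp_all
qed

lemma ord_eqI_pow_cong_one:
  fixes m x y :: nat
  assumes "\<And>n. [x ^ n = 1] (mod m) \<longleftrightarrow> [y ^ n = 1] (mod m)"
  shows "ord m x = ord m y"
proof (rule dvd_antisym)
  show "ord m x dvd ord m y"
    using assms[of "ord m y"] ord[of y m] by (simp only: ord_divides)
  show "ord m y dvd ord m x"
    using assms[of "ord m x"] ord[of x m] by (simp only: ord_divides)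
qed

lemma ord_eq_of_cong_minus:
  fixes m x y :: nat
  assumes "4 dvd m" "[y = 1] (mod 4)" "even (ord m y)" "[int x = - int y] (mod int m)"
  shows "ord m x = ord m y"
proof (rule ord_eqI_pow_cong_one)
  fix n
  have x_pow: "[int (x ^ n) = (-1) ^ n * int (y ^ n)] (mod int m)"
    using cong_pow[OF assms(4), of n] by (simp only: power_minus[of "int y"] of_nat_power)
  show "[x ^ n = 1] (mod m) \<longleftrightarrow> [y ^ n = 1] (mod m)"
  proof (cases "even n")
    case True
    then have "[int (x ^ n) = int (y ^ n)] (mod int m)"
      using x_pow by simp
    then have "[x ^ n = y ^ n] (mod m)"
      by (simp only: cong_int_iff)
    then show ?thesis
      by (meson cong_sym cong_trans)
  next
    case False
    have "4 dvd int m"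
      using assms(1) int_dvd_int_iff[of 4 m] by simp
    have "[y ^ n = 1] (mod 4)"
      using cong_pow[OF assms(2), of n] by simp
    then have "[int (y ^ n) = 1] (mod 4)"
      using cong_int_iff[of "y ^ n" 1 4] by simp
    moreover have "[int (x ^ n) = - int (y ^ n)] (mod 4)"
      using x_pow False cong_dvd_modulus[OF _ \<open>4 dvd int m\<close>] by simp
    ultimately have x_pow_mod_4: "[int (x ^ n) = - 1] (mod 4)"
      by (meson cong_minus_minus_iff cong_trans)
    have "\<not> [x ^ n = 1] (mod m)"
    proof
      assume "[x ^ n = 1] (mod m)"
      then have "[int (x ^ n) = 1] (mod 4)"
        using cong_int_iff[of "x ^ n" 1 m] cong_dvd_modulus[OF _ \<open>4 dvd int m\<close>] by simp
      with x_pow_mod_4 have "[- 1 = 1] (mod (4::int))"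
        by (meson cong_sym cong_trans)
      then show False
        by (simp add: cong_def)
    qed
    moreover have "\<not> [y ^ n = 1] (mod m)"
      using False assms(3) by (meson dvd_trans ord_divides)
    ultimately show ?thesis
      by blast
  qed
qed

lemma even_ord_power_five:
  assumes "k \<ge> 2" "\<not> [(5::nat) ^ j = 1] (mod 2 ^ k)"
  shows "even (ord (2 ^ k) ((5::nat) ^ j))"
proof -
  have "[(5::nat) ^ 2 ^ (k - 2) = 1] (mod 2 ^ k)"
    using ord[of 5 "2 ^ k"] ord_two_power_five[OF assms(1)] by simp
  then have "[((5::nat) ^ 2 ^ (k - 2)) ^ j = 1] (mod 2 ^ k)"
    using cong_pow by fastforce
  then have "[((5::nat) ^ j) ^ 2 ^ (k - 2) = 1] (mod 2 ^ k)"
    by (simp only: power_mult[symmetric] mult.commute)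
  then have "ord (2 ^ k) ((5::nat) ^ j) dvd 2 ^ (k - 2)"
    by (simp only: ord_divides)
  then obtain i where i: "ord (2 ^ k) ((5::nat) ^ j) = 2 ^ i"
    using divides_primepow_nat[OF two_is_prime_nat] by blast
  moreover have "i \<noteq> 0"
    using i assms(2) ord_eq_Suc_0_iff by fastforce
  ultimately show ?thesis
    by simp
qed

lemma ord_eq_ord_power_five:
  assumes "k \<ge> 2" "\<sigma> \<in> {1, -1}" "[int q = \<sigma> * 5 ^ j] (mod 2 ^ k)" "\<not> 2 ^ k dvd q + 1"
  shows "ord (2 ^ k) q = ord (2 ^ k) ((5::nat) ^ j)"
proof (cases "\<sigma> = 1")
  case True
  then have "[int q = int (5 ^ j)] (mod int (2 ^ k))"
    using assms(3) by simp
  then show ?thesis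
    by (simp only: cong_int_iff ord_cong)
next
  case False
  then have q: "[int q = - int (5 ^ j)] (mod int (2 ^ k))"
    using assms(2,3) by simp
  have "\<not> [(5::nat) ^ j = 1] (mod 2 ^ k)"
  proof
    assume "[(5::nat) ^ j = 1] (mod 2 ^ k)"
    then have "[- int (5 ^ j) = - int 1] (mod int (2 ^ k))"
      by (simp only: cong_int_iff cong_minus_minus_iff)
    with q have "[int q + 1 = - int 1 + 1] (mod int (2 ^ k))"
      by (intro cong_add) (auto intro: cong_trans)
    then have "int (2 ^ k) dvd int (q + 1)"
      by (simp add: cong_0_iff add.commute)
    with assms(4) show False
      by (simp only: int_dvd_int_iff)
  qed
  moreover have "4 dvd (2::nat) ^ k"
    using le_imp_power_dvd[OF assms(1), of "2::nat"] by simp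
  moreover have "[5 ^ j = 1] (mod (4::nat))"
    by (simp add: cong_def power_five_mod_four)
  ultimately show ?thesis
    using ord_eq_of_cong_minus[OF _ _ _ q] even_ord_power_five[OF assms(1)] by blast
qed

lemma t_index_power_five:
  assumes "k \<ge> 2"
  shows "t_index (2 ^ k) (5 ^ j) = real (gcd (2 ^ (k - 2)) j)"
proof -
  define g where "g = gcd (2 ^ (k - 2)) j"
  obtain r where r: "(2::nat) ^ (k - 2) = g * r"
    unfolding g_def by (meson gcd_dvd1 dvd_def)
  then have "r > 0" "g > 0"
    by (metis gr0I mult_is_0 power_not_zero zero_neq_numeral)+
  have "ord (2 ^ k) ((5::nat) ^ j) = 2 ^ (k - 2) div g"
    using ord_power[OF coprime_two_power_five, of k j] ord_two_power_five[OF assms]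
    by (simp add: g_def gcd.commute)
  then have "ord (2 ^ k) ((5::nat) ^ j) = r"
    using r \<open>g > 0\<close> by simp
  moreover have "totient ((2::nat) ^ k) = 2 * g * r"
  proof -
    have "totient ((2::nat) ^ Suc (k - 1)) = 2 ^ (k - 1)"
      using totient_prime_power_Suc[of 2 "k - 1"] by simp
    moreover have "Suc (k - 1) = k" "(2::nat) ^ (k - 1) = 2 * 2 ^ (k - 2)"
      using assms
      by (simp_all add: power_Suc[symmetric] Suc_diff_Suc numeral_2_eq_2)
    ultimately show ?thesis
      using r by simp
  qed
  ultimately show ?thesis
    using \<open>r > 0\<close> by (simp add: t_index_def g_def)
qed

theorem corollary3p10:
  fixes p \<nu> l :: nat
  assumes "prime p" and "odd p" and "\<nu> > 0" and "l > 0"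
  shows "(\<not> (2 ^ (\<nu> + 1) dvd p ^ l + 1) \<longrightarrow>
           t_index (2 ^ (\<nu> + 1)) (p ^ l) = real (gcd (2 ^ (\<nu> - 1)) (alpha p \<nu> * l)))
       \<and> t_index (2 ^ (\<nu> + 1)) (5 ^ l) = real (gcd (2 ^ (\<nu> - 1)) l)"
proof (intro conjI impI)
  have k: "\<nu> + 1 \<ge> 2" "\<nu> + 1 - 2 = \<nu> - 1"
    using assms(3) by simp_all
  show "t_index (2 ^ (\<nu> + 1)) (5 ^ l) = real (gcd (2 ^ (\<nu> - 1)) l)"
    using t_index_power_five[OF k(1)] k(2) by simp
  assume not_dvd: "\<not> 2 ^ (\<nu> + 1) dvd p ^ l + 1"
  define \<epsilon> :: int where "\<epsilon> = (if p mod 4 = 1 then 1 else -1)"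
  have "[int p ^ l = (\<epsilon> * 5 ^ alpha p \<nu>) ^ l] (mod 2 ^ (\<nu> + 1))"
    using cong_pow[OF alpha_cong(2)[OF assms(3,2)]] unfolding \<epsilon>_def .
  then have p_power: "[int (p ^ l) = \<epsilon> ^ l * 5 ^ (alpha p \<nu> * l)] (mod 2 ^ (\<nu> + 1))"
    by (simp add: power_mult_distrib power_mult)
  have sign: "\<epsilon> ^ l \<in> {1, -1}"
    unfolding \<epsilon>_def by (simp add: minus_one_power_iff)
  have "ord (2 ^ (\<nu> + 1)) (p ^ l) = ord (2 ^ (\<nu> + 1)) ((5::nat) ^ (alpha p \<nu> * l))"
    using ord_eq_ord_power_five[OF k(1) sign p_power not_dvd] .
  then have "t_index (2 ^ (\<nu> + 1)) (p ^ l) = t_index (2 ^ (\<nu> + 1)) (5 ^ (alpha p \<nu> * l))"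
    by (simp add: t_index_def)
  then show "t_index (2 ^ (\<nu> + 1)) (p ^ l) = real (gcd (2 ^ (\<nu> - 1)) (alpha p \<nu> * l))"
    using t_index_power_five[OF k(1)] k(2) by simp
qed

end
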